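(* Let $i\ge1$ and consider a solution $x\in\mathbb{N}^n$ with $\|x\|_1\le 2^i$. Then there is a partition of $x$ into two solutions $x_1,x_2\in\mathbb{N}^n$ such that: (1) $\|x_1\|_1,\|x_2\|_1\le 2^{i-1}$ and $x=x_1+x_2$; (2) $|w(x_1)-\tfrac12 w(x)|\le 2\Delta$ and $|w(x_2)-\tfrac12 w(x)|\le 2\Delta$; (3) $|p(x_1)-\tfrac12 p(x)|\le 2\Delta$ and $|p(x_2)-\tfrac12 p(x)|\le 2\Delta$.
   Context: Fix items $(p_1,w_1),\dots,(p_n,w_n)$ with $p_k,w_k\in\mathbb{N}$. For $x\in\mathbb{N}^n$ (a multiset of items), $p(x)=\sum_k p_kx_k$, $w(x)=\sum_k w_kx_k$, $\|x\|_1=\sum_k x_k$. Let $p_{\max}=\max_k p_k$, $w_{\max}=\max_k w_k$ and $\Delta:=p_{\max}+w_{\max}$. *)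

theory Defs
  imports Complex_Main
begin

text \<open>Items are indexed by k < n, with profits p k and weights w k.
  A multiset of items is a vector x :: nat \<Rightarrow> nat, of which only the
  coordinates k < n are relevant.\<close>

definition profit :: "nat \<Rightarrow> (nat \<Rightarrow> nat) \<Rightarrow> (nat \<Rightarrow> nat) \<Rightarrow> nat" where
  "profit n p x = (\<Sum>k<n. p k * x k)"

definition weight :: "nat \<Rightarrow> (nat \<Rightarrow> nat) \<Rightarrow> (nat \<Rightarrow> nat) \<Rightarrow> nat" where
  "weight n w x = (\<Sum>k<n. w k * x k)"

definition norm1 :: "nat \<Rightarrow> (nat \<Rightarrow> nat) \<Rightarrow> nat" where
  "norm1 n x = (\<Sum>k<n. x k)"

definition maxval :: "nat \<Rightarrow> (nat \<Rightarrow> nat) \<Rightarrow> nat" where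
  "maxval n f = Max (insert 0 (f ` {..<n}))"

definition Delta :: "nat \<Rightarrow> (nat \<Rightarrow> nat) \<Rightarrow> (nat \<Rightarrow> nat) \<Rightarrow> nat" where
  "Delta n p w = maxval n p + maxval n w"

end

(*
  Write x as the list of its items sorted by weight and cut it into consecutive pairs; one half
  gets one item of every pair, the other half the other item (and the odd item is left to the
  first half). However the pairs are oriented, their weight differences telescope along the
  sorted list, so the weights of the halves differ by at most 2 w_max. Orienting each pair
  against the sign of the profit difference of the pairs already placed keeps the profit
  difference of the halves within p_max.
*)
theory Submission
  imports Defs "HOL-Library.Multiset"
begin

fun pair_split :: "('a \<Rightarrow> 'b::linordered_idom) \<Rightarrow> 'a list \<Rightarrow> 'a list \<times> 'a list" where
  "pair_split p [] = ([], [])"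
| "pair_split p [x] = ([x], [])"
| "pair_split p (x # y # zs) =
     (case pair_split p zs of (A, B) \<Rightarrow>
        if (sum_list (map p B) \<le> sum_list (map p A)) = (p y \<le> p x)
        then (y # A, x # B) else (x # A, y # B))"

lemma mset_pair_split:
  "mset (fst (pair_split p L)) + mset (snd (pair_split p L)) = mset L"
  by (induction p L rule: pair_split.induct) (auto split: prod.split)

lemma length_pair_split:
  "length (fst (pair_split p L)) = (length L + 1) div 2"
  "length (snd (pair_split p L)) = length L div 2"
  by (induction p L rule: pair_split.induct) (auto split: prod.split)

lemma pair_split_balances_profit:
  assumes "\<forall>y\<in>set L. 0 \<le> p y \<and> p y \<le> P" and "0 \<le> P"
  shows "\<bar>sum_list (map p (fst (pair_split p L))) - sum_list (map p (snd (pair_split p L)))\<bar>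
           \<le> P"
  using assms
proof (induction p L rule: pair_split.induct)
  case (3 p x y zs)
  obtain A B where AB: "pair_split p zs = (A, B)" by fastforce
  have "\<bar>sum_list (map p A) - sum_list (map p B)\<bar> \<le> P" "\<bar>p x - p y\<bar> \<le> P"
    using "3.IH" "3.prems" AB by (auto simp: abs_le_iff)
  then show ?case
    using AB by (auto simp: abs_le_iff algebra_simps)
qed (simp_all add: abs_le_iff)

lemma pair_split_balances_weight:
  fixes w :: "'a \<Rightarrow> 'b::linordered_idom"
  assumes "sorted (map w L)" and "\<forall>y\<in>set L. lo \<le> w y \<and> w y \<le> hi"
    and "0 \<le> lo" and "lo \<le> hi"
  shows "\<bar>sum_list (map w (fst (pair_split p L))) - sum_list (map w (snd (pair_split p L)))\<bar>
           \<le> hi + (hi - lo)"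
  using assms
proof (induction p L arbitrary: lo rule: pair_split.induct)
  case (3 p x y zs)
  obtain A B where AB: "pair_split p zs = (A, B)" by fastforce
  have "\<bar>sum_list (map w A) - sum_list (map w B)\<bar> \<le> hi + (hi - w y)"
    using "3.IH"[of "w y"] "3.prems" AB by auto
  moreover have "lo \<le> w x" "w x \<le> w y"
    using "3.prems" by auto
  ultimately show ?case
    using AB by (simp add: abs_le_iff split: if_splits)
qed (simp_all add: abs_le_iff)

definition item_list :: "nat \<Rightarrow> (nat \<Rightarrow> nat) \<Rightarrow> nat list" where
  "item_list n x = concat (map (\<lambda>k. replicate (x k) k) [0..<n])"

lemma set_item_list: "set (item_list n x) \<subseteq> {..<n}"
  by (auto simp: item_list_def)

lemma count_list_item_list: "k < n \<Longrightarrow> count_list (item_list n x) k = x k"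
  by (induction n) (auto simp: item_list_def less_Suc_eq count_list_eq_length_filter)

lemma weight_add: "\<forall>k<n. x k = y k + z k \<Longrightarrow> weight n w x = weight n w y + weight n w z"
  unfolding weight_def by (simp add: algebra_simps sum.distrib)

lemma profit_add: "\<forall>k<n. x k = y k + z k \<Longrightarrow> profit n p x = profit n p y + profit n p z"
  unfolding profit_def by (simp add: algebra_simps sum.distrib)

lemma norm1_add: "\<forall>k<n. x k = y k + z k \<Longrightarrow> norm1 n x = norm1 n y + norm1 n z"
  unfolding norm1_def by (simp add: sum.distrib)

lemma weight_count_list: "set A \<subseteq> {..<n} \<Longrightarrow> weight n w (count_list A) = sum_list (map w A)"
  unfolding weight_def by (simp add: sum_list_map_eq_sum_count2[of A "{..<n}"] mult.commute)

lemma profit_count_list: "set A \<subseteq> {..<n} \<Longrightarrow> profit n p (count_list A) = sum_list (map p A)"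
  unfolding profit_def by (simp add: sum_list_map_eq_sum_count2[of A "{..<n}"] mult.commute)

lemma norm1_count_list: "set A \<subseteq> {..<n} \<Longrightarrow> norm1 n (count_list A) = length A"
  unfolding norm1_def by (simp add: sum_count_set)

lemma le_maxval: "k < n \<Longrightarrow> f k \<le> maxval n f"
  unfolding maxval_def by (intro Max_ge) auto

lemma abs_sub_half_sum:
  fixes a b :: "'a::linordered_field"
  shows "\<bar>a - (a + b) / 2\<bar> = \<bar>a - b\<bar> / 2" and "\<bar>b - (a + b) / 2\<bar> = \<bar>a - b\<bar> / 2"
  by (simp_all add: abs_if field_simps)

lemma balanced_split:
  fixes n :: nat and p w x :: "nat \<Rightarrow> nat"
  obtains x1 x2 where "\<forall>k<n. x k = x1 k + x2 k"
    and "norm1 n x1 = (norm1 n x + 1) div 2" and "norm1 n x2 = norm1 n x div 2"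
    and "\<bar>real (weight n w x1) - real (weight n w x2)\<bar> \<le> 2 * real (maxval n w)"
    and "\<bar>real (profit n p x1) - real (profit n p x2)\<bar> \<le> real (maxval n p)"
proof -
  define L where "L = sort_key (\<lambda>k. real (w k)) (item_list n x)"
  define A where "A = fst (pair_split (\<lambda>k. real (p k)) L)"
  define B where "B = snd (pair_split (\<lambda>k. real (p k)) L)"
  have parts: "mset A + mset B = mset L"
    unfolding A_def B_def by (rule mset_pair_split)
  have items: "set L \<subseteq> {..<n}"
    using set_item_list by (simp add: L_def)
  then have items_A: "set A \<subseteq> {..<n}" and items_B: "set B \<subseteq> {..<n}"
    using parts by (metis set_mset_mset set_mset_union le_sup_iff)+
  have x_split: "\<forall>k<n. x k = count_list A k + count_list B k"
    using parts count_list_item_list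
    by (metis L_def count_mset count_union mset_sort)
  have lengths: "length A = (length L + 1) div 2" "length B = length L div 2"
    unfolding A_def B_def by (rule length_pair_split)+
  then have norm_x: "norm1 n x = length L"
    using norm1_add[OF x_split] by (simp add: norm1_count_list items_A items_B)
  have norms: "norm1 n (count_list A) = (norm1 n x + 1) div 2"
    "norm1 n (count_list B) = norm1 n x div 2"
    using lengths norm_x by (simp_all add: norm1_count_list items_A items_B)
  have weight_bound:
    "\<bar>(\<Sum>k\<leftarrow>A. real (w k)) - (\<Sum>k\<leftarrow>B. real (w k))\<bar> \<le> 2 * real (maxval n w)"
    using pair_split_balances_weight[of "\<lambda>k. real (w k)" L 0 "real (maxval n w)" "\<lambda>k. real (p k)"]
      items le_maxval by (auto simp: L_def A_def B_def subset_iff)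
  have profit_bound:
    "\<bar>(\<Sum>k\<leftarrow>A. real (p k)) - (\<Sum>k\<leftarrow>B. real (p k))\<bar> \<le> real (maxval n p)"
    unfolding A_def B_def
    by (rule pair_split_balances_profit) (use items le_maxval in auto)
  have real_sums: "real (weight n w (count_list C)) = (\<Sum>k\<leftarrow>C. real (w k))"
    "real (profit n p (count_list C)) = (\<Sum>k\<leftarrow>C. real (p k))"
    if "set C \<subseteq> {..<n}" for C
    using that by (simp_all add: weight_count_list profit_count_list o_def flip: sum_list_of_nat)
  show thesis
    using that[of "count_list A" "count_list B"] x_split norms weight_bound profit_bound
      real_sums[OF items_A] real_sums[OF items_B] by simp
qed

theorem lemma3p3:
  fixes n i :: nat and p w x :: "nat \<Rightarrow> nat"
  assumes "i \<ge> 1"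
    and "norm1 n x \<le> 2 ^ i"
  shows "\<exists>x1 x2 :: nat \<Rightarrow> nat.
           norm1 n x1 \<le> 2 ^ (i - 1) \<and> norm1 n x2 \<le> 2 ^ (i - 1) \<and>
           (\<forall>k<n. x k = x1 k + x2 k) \<and>
           \<bar>real (weight n w x1) - real (weight n w x) / 2\<bar> \<le> 2 * real (Delta n p w) \<and>
           \<bar>real (weight n w x2) - real (weight n w x) / 2\<bar> \<le> 2 * real (Delta n p w) \<and>
           \<bar>real (profit n p x1) - real (profit n p x) / 2\<bar> \<le> 2 * real (Delta n p w) \<and>
           \<bar>real (profit n p x2) - real (profit n p x) / 2\<bar> \<le> 2 * real (Delta n p w)"
proof -
  obtain x1 x2 where x_split: "\<forall>k<n. x k = x1 k + x2 k"
    and norms: "norm1 n x1 = (norm1 n x + 1) div 2" "norm1 n x2 = norm1 n x div 2"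
    and weight_diff: "\<bar>real (weight n w x1) - real (weight n w x2)\<bar> \<le> 2 * real (maxval n w)"
    and profit_diff: "\<bar>real (profit n p x1) - real (profit n p x2)\<bar> \<le> real (maxval n p)"
    by (rule balanced_split)
  have "(2::nat) ^ i = 2 * 2 ^ (i - 1)"
    using \<open>i \<ge> 1\<close> by (simp flip: power_Suc)
  then have "norm1 n x1 \<le> 2 ^ (i - 1)" "norm1 n x2 \<le> 2 ^ (i - 1)"
    using norms \<open>norm1 n x \<le> 2 ^ i\<close> by simp_all
  moreover have "real (weight n w x) = real (weight n w x1) + real (weight n w x2)"
    and "real (profit n p x) = real (profit n p x1) + real (profit n p x2)"
    by (simp_all add: weight_add[OF x_split] profit_add[OF x_split])
  then have "\<bar>real (weight n w x1) - real (weight n w x) / 2\<bar> \<le> real (maxval n w)"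
    and "\<bar>real (weight n w x2) - real (weight n w x) / 2\<bar> \<le> real (maxval n w)"
    and "\<bar>real (profit n p x1) - real (profit n p x) / 2\<bar> \<le> real (maxval n p)"
    and "\<bar>real (profit n p x2) - real (profit n p x) / 2\<bar> \<le> real (maxval n p)"
    using weight_diff profit_diff by (simp_all add: abs_sub_half_sum)
  moreover have "real (maxval n w) \<le> real (Delta n p w)" and "real (maxval n p) \<le> real (Delta n p w)"
    by (simp_all add: Delta_def)
  ultimately show ?thesis
    using x_split by (intro exI[of _ x1] exI[of _ x2]) auto
qed

end
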